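(* Let $\rho,\sigma,\alpha\in\mathbb{F}\setminus\{\frac12\}$, and let $\mathbf{A}$ be the 5-dimensional LV algebra with natural basis $e_1,\dots,e_5$ in which $e_1e_2=\rho e_1+(1-\rho)e_2$, $e_2e_3=\sigma e_2+(1-\sigma)e_3$, $e_3e_4=\alpha e_3+(1-\alpha)e_4$, $e_3e_5=\alpha e_3+(1-\alpha)e_5$, and $e_ie_j=\frac12(e_i+e_j)$ for all other pairs $i,j$. Then $\mathrm{Der}(\mathbf{A})=\{f\in L(\mathbf{A}) : f(e_1)=f(e_2)=f(e_3)=0 \text{ and } \mathrm{Im}(f)\subseteq\langle e_4-e_5\rangle\}$.
   Context: Let $\mathbb{F}$ be a field of characteristic different from $2$. A Lotka–Volterra (LV) algebra of dimension $5$ over $\mathbb{F}$ is a commutative (not necessarily associative) $\mathbb{F}$-algebra $\mathbf{A}$ with a basis $e_1,\dots,e_5$ (the natural basis) such that $e_ie_j=\alpha_{ij}e_i+\alpha_{ji}e_j$ with $\alpha_{ij}\in\mathbb{F}$, $\alpha_{ii}=\frac12$ and $\alpha_{ij}+\alpha_{ji}=1$ for all $i,j$. A derivation is a linear map $D:\mathbf{A}\to\mathbf{A}$ with $D(uv)=D(u)v+uD(v)$ for all $u,v$; $\mathrm{Der}(\mathbf{A})$ is the set of derivations, $L(\mathbf{A})$ the set of linear maps $\mathbf{A}\to\mathbf{A}$, and $\langle x_1,\dots,x_k\rangle$ the linear span. *)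

theory Defs
  imports Main
begin

definition Vsp :: "(nat \<Rightarrow> 'a::field) set" where
  "Vsp = {v. \<forall>i. i \<notin> {1..5} \<longrightarrow> v i = 0}"

definition ebas :: "nat \<Rightarrow> nat \<Rightarrow> 'a::field" where
  "ebas i = (\<lambda>k. if k = i then 1 else 0)"

text \<open>Product of the LV algebra with structure constants alpha (e_i e_j = alpha i j e_i + alpha j i e_j),
  extended bilinearly: (uv)_k = sum_j alpha k j (u_k v_j + u_j v_k).\<close>
definition lv_mult :: "(nat \<Rightarrow> nat \<Rightarrow> 'a::field) \<Rightarrow> (nat \<Rightarrow> 'a) \<Rightarrow> (nat \<Rightarrow> 'a) \<Rightarrow> nat \<Rightarrow> 'a" where
  "lv_mult al u v = (\<lambda>k. if k \<in> {1..5} then (\<Sum>j=1..5. al k j * (u k * v j + u j * v k)) else 0)"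

definition is_LV :: "(nat \<Rightarrow> nat \<Rightarrow> 'a::field) \<Rightarrow> bool" where
  "is_LV al \<longleftrightarrow> (\<forall>i\<in>{1..5}. \<forall>j\<in>{1..5}. al i j + al j i = 1) \<and> (\<forall>i\<in>{1..5}. al i i = 1/2)"

definition lin_map :: "((nat \<Rightarrow> 'a::field) \<Rightarrow> (nat \<Rightarrow> 'a)) \<Rightarrow> bool" where
  "lin_map f \<longleftrightarrow> (\<forall>v\<in>Vsp. f v \<in> Vsp) \<and>
     (\<forall>u\<in>Vsp. \<forall>v\<in>Vsp. f (\<lambda>k. u k + v k) = (\<lambda>k. f u k + f v k)) \<and>
     (\<forall>c. \<forall>v\<in>Vsp. f (\<lambda>k. c * v k) = (\<lambda>k. c * f v k))"

definition is_derivation :: "(nat \<Rightarrow> nat \<Rightarrow> 'a::field) \<Rightarrow> ((nat \<Rightarrow> 'a) \<Rightarrow> (nat \<Rightarrow> 'a)) \<Rightarrow> bool" where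
  "is_derivation al f \<longleftrightarrow> lin_map f \<and>
     (\<forall>u\<in>Vsp. \<forall>v\<in>Vsp. f (lv_mult al u v) = (\<lambda>k. lv_mult al (f u) v k + lv_mult al u (f v) k))"

definition al7 :: "'a::field \<Rightarrow> 'a \<Rightarrow> 'a \<Rightarrow> nat \<Rightarrow> nat \<Rightarrow> 'a" where
  "al7 \<rho> \<sigma> \<alpha> i j =
     (if (i, j) = (1, 2) then \<rho> else if (i, j) = (2, 1) then 1 - \<rho>
      else if (i, j) = (2, 3) then \<sigma> else if (i, j) = (3, 2) then 1 - \<sigma>
      else if (i, j) = (3, 4) then \<alpha> else if (i, j) = (4, 3) then 1 - \<alpha>
      else if (i, j) = (3, 5) then \<alpha> else if (i, j) = (5, 3) then 1 - \<alpha>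
      else 1/2)"

end

theory Submission imports Defs begin

(* Each e_i is idempotent, so a derivation D satisfies D(e_i) = 2 e_i D(e_i); read coordinatewise,
   this kills D(e_i)_k whenever alpha_ki \<noteq> 1/2 and forces sum_m alpha_im D(e_i)_m = 0. Reading the
   Leibniz rule for e_i e_j at a third index k gives
   (alpha_ij - alpha_kj) D(e_i)_k + (alpha_ji - alpha_ki) D(e_j)_k = 0, which kills the remaining
   coordinates except those inside the block {e_4, e_5}; there the row sums give
   D(e_4), D(e_5) \<in> <e_4 - e_5>. Conversely e_4 - e_5 spans an ideal on which the algebra acts by
   scalars, and a direct computation shows that every such map is a derivation. *)

lemma sum_1_5: "sum g {1..5::nat} = g 1 + g 2 + g 3 + g 4 + g 5"
  by (simp add: eval_nat_numeral atLeastAtMostSuc_conv add.commute add.left_commute)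

lemma ebas_in_Vsp: "i \<in> {1..5} \<Longrightarrow> ebas i \<in> Vsp"
  by (auto simp: ebas_def Vsp_def)

lemma sum_mult_ebas: "i \<in> {1..5} \<Longrightarrow> (\<Sum>j=1..5. g j * ebas i j) = g i"
  by (simp add: ebas_def if_distrib[where f="\<lambda>x. g _ * x"] cong: if_cong)

lemma lv_mult_in_Vsp: "lv_mult al u v \<in> Vsp"
  by (simp add: lv_mult_def Vsp_def)

lemma lv_mult_outside: "k \<notin> {1..5} \<Longrightarrow> lv_mult al u v k = 0"
  unfolding lv_mult_def by presburger

lemma lv_mult_commute: "lv_mult al u v = lv_mult al v u"
  unfolding lv_mult_def by (intro ext if_cong refl sum.cong) (simp add: algebra_simps)

lemma lv_mult_ebas_left:
  assumes "i \<in> {1..5}" "k \<in> {1..5}"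
  shows "lv_mult al (ebas i) v k = (if k = i then \<Sum>j=1..5. al i j * v j else 0) + al k i * v k"
proof -
  have "lv_mult al (ebas i) v k = (\<Sum>j=1..5. al k j * (ebas i k * v j + ebas i j * v k))"
    using assms by (simp add: lv_mult_def)
  also have "\<dots> = (\<Sum>j=1..5. (if k = i then al i j * v j else 0) + (if j = i then al k i * v k else 0))"
    by (rule sum.cong) (auto simp: ebas_def)
  also have "\<dots> = (if k = i then \<Sum>j=1..5. al i j * v j else 0) + al k i * v k"
    using assms by (simp add: sum.distrib)
  finally show ?thesis .
qed

lemma lv_mult_ebas_ebas:
  assumes "i \<in> {1..5}" "j \<in> {1..5}"
  shows "lv_mult al (ebas i) (ebas j) = (\<lambda>k. al i j * ebas i k + al j i * ebas j k)"
proof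
  fix k
  show "lv_mult al (ebas i) (ebas j) k = al i j * ebas i k + al j i * ebas j k"
  proof (cases "k \<in> {1..5}")
    case True
    then have "lv_mult al (ebas i) (ebas j) k = (if k = i then al i j else 0) + al k i * ebas j k"
      by (simp only: lv_mult_ebas_left[OF assms(1)] sum_mult_ebas[OF assms(2)])
    then show ?thesis by (auto simp: ebas_def)
  next
    case False
    then show ?thesis using assms by (auto simp: lv_mult_def ebas_def)
  qed
qed

lemma lin_map_in_Vsp: "lin_map f \<Longrightarrow> v \<in> Vsp \<Longrightarrow> f v \<in> Vsp"
  unfolding lin_map_def by blast

lemma lin_map_outside: "lin_map f \<Longrightarrow> v \<in> Vsp \<Longrightarrow> k \<notin> {1..5} \<Longrightarrow> f v k = 0"
  using lin_map_in_Vsp by (auto simp: Vsp_def)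

lemma lin_map_lincomb:
  assumes "lin_map f" "u \<in> Vsp" "v \<in> Vsp"
  shows "f (\<lambda>k. a * u k + b * v k) = (\<lambda>k. a * f u k + b * f v k)"
proof -
  have "(\<lambda>k. a * u k) \<in> Vsp" "(\<lambda>k. b * v k) \<in> Vsp"
    using assms(2,3) by (auto simp: Vsp_def)
  then show ?thesis using assms unfolding lin_map_def by simp
qed

lemma lin_map_zero: "lin_map f \<Longrightarrow> f (\<lambda>k. 0) = (\<lambda>k. 0)"
  using lin_map_lincomb[of f "\<lambda>k. 0" "\<lambda>k. 0" 0 0] by (simp add: Vsp_def)

lemma lin_map_sum_ebas:
  assumes "lin_map f" "finite S" "S \<subseteq> {1..5}"
  shows "f (\<lambda>k. \<Sum>i\<in>S. w i * ebas i k) = (\<lambda>k. \<Sum>i\<in>S. w i * f (ebas i) k)"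
  using assms(2,3)
proof (induction S rule: finite_induct)
  case empty
  then show ?case using lin_map_zero[OF assms(1)] by simp
next
  case (insert x F)
  have "(\<lambda>k. \<Sum>i\<in>F. w i * ebas i k) \<in> Vsp"
    using insert.prems by (auto simp: Vsp_def ebas_def intro!: sum.neutral)
  then show ?case
    using insert lin_map_lincomb[OF assms(1) ebas_in_Vsp, of x _ "w x" 1] by simp
qed

lemma Vsp_eq_sum_ebas: "v \<in> Vsp \<Longrightarrow> v = (\<lambda>k. \<Sum>i=1..5. v i * ebas i k)"
proof
  fix k
  assume "v \<in> Vsp"
  have "(\<Sum>i=1..5. v i * ebas i k) = (\<Sum>i=1..5. if k = i then v k else 0)"
    by (rule sum.cong) (auto simp: ebas_def)
  then show "v k = (\<Sum>i=1..5. v i * ebas i k)"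
    using \<open>v \<in> Vsp\<close> by (auto simp: Vsp_def)
qed

lemma lin_map_apply:
  "lin_map f \<Longrightarrow> v \<in> Vsp \<Longrightarrow> f v = (\<lambda>k. \<Sum>i=1..5. v i * f (ebas i) k)"
  using lin_map_sum_ebas[of f "{1..5}" v] Vsp_eq_sum_ebas[of v] by simp

lemma lin_map_apply_line:
  assumes "lin_map f" "v \<in> Vsp"
    and "f (ebas 1) = (\<lambda>_. 0)" "f (ebas 2) = (\<lambda>_. 0)" "f (ebas 3) = (\<lambda>_. 0)"
    and "f (ebas 4) = (\<lambda>k. c4 * w k)" "f (ebas 5) = (\<lambda>k. c5 * w k)"
  shows "f v = (\<lambda>k. (v 4 * c4 + v 5 * c5) * w k)"
  using lin_map_apply[OF assms(1,2), unfolded sum_1_5] assms(3-7) by (simp add: algebra_simps)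

lemma derivation_lin_map: "is_derivation al f \<Longrightarrow> lin_map f"
  unfolding is_derivation_def by blast

lemma derivation_mult:
  "is_derivation al f \<Longrightarrow> u \<in> Vsp \<Longrightarrow> v \<in> Vsp \<Longrightarrow>
    f (lv_mult al u v) k = lv_mult al (f u) v k + lv_mult al u (f v) k"
  by (simp add: is_derivation_def fun_eq_iff)

lemma derivation_ebas_coord:
  assumes D: "is_derivation al f" and ijk: "i \<in> {1..5}" "j \<in> {1..5}" "k \<in> {1..5}"
  shows "al i j * f (ebas i) k + al j i * f (ebas j) k =
    ((if k = i then \<Sum>m=1..5. al i m * f (ebas j) m else 0) + al k i * f (ebas j) k) +
    ((if k = j then \<Sum>m=1..5. al j m * f (ebas i) m else 0) + al k j * f (ebas i) k)"
proof -
  have "al i j * f (ebas i) k + al j i * f (ebas j) k = f (lv_mult al (ebas i) (ebas j)) k"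
    using lin_map_lincomb[OF derivation_lin_map[OF D] ebas_in_Vsp ebas_in_Vsp] ijk
    by (simp add: lv_mult_ebas_ebas)
  also have "\<dots> = lv_mult al (f (ebas i)) (ebas j) k + lv_mult al (ebas i) (f (ebas j)) k"
    using derivation_mult[OF D ebas_in_Vsp ebas_in_Vsp] ijk by blast
  also have "\<dots> = lv_mult al (ebas i) (f (ebas j)) k + lv_mult al (ebas j) (f (ebas i)) k"
    by (simp add: lv_mult_commute[of al "f (ebas i)"])
  finally show ?thesis
    by (simp only: lv_mult_ebas_left ijk)
qed

lemma derivation_ebas_coord_off:
  assumes "is_derivation al f" "i \<in> {1..5}" "j \<in> {1..5}" "k \<in> {1..5}" "k \<noteq> i" "k \<noteq> j"
  shows "(al i j - al k j) * f (ebas i) k + (al j i - al k i) * f (ebas j) k = 0"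
  using derivation_ebas_coord[OF assms(1-4)] assms(5,6) by (simp add: algebra_simps)

lemma derivation_ebas_row_sum:
  assumes "is_derivation al f" "i \<in> {1..5}" "(2::'a::field) \<noteq> 0"
  shows "(\<Sum>m=1..5. al i m * f (ebas i) m) = (0::'a)"
  using derivation_ebas_coord[OF assms(1,2,2,2)] assms(3) by simp

lemma derivation_idempotent_coord:
  assumes "is_derivation al f" "i \<in> {1..5}" "k \<in> {1..5}" "k \<noteq> i"
    and "al i i = 1/2" "al k i \<noteq> 1/2" "(2::'a::field) \<noteq> 0"
  shows "f (ebas i) k = (0::'a)"
proof -
  have "(1 - 2 * al k i) * f (ebas i) k = 0"
    using derivation_ebas_coord_off[OF assms(1,2,2,3,4,4)] assms(5,7) by (simp add: algebra_simps)
  moreover have "2 * al k i \<noteq> 1"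
    using assms(6,7) by (auto simp: field_simps)
  ultimately show ?thesis by simp
qed

lemma derivation_ebas_coord_zero:
  assumes "is_derivation al f" "i \<in> {1..5}" "j \<in> {1..5}" "k \<in> {1..5}" "k \<noteq> i" "k \<noteq> j"
    and "al j i = al k i \<or> f (ebas j) k = 0" "al i j \<noteq> al k j"
  shows "f (ebas i) k = 0"
  using derivation_ebas_coord_off[OF assms(1-6)] assms(7,8) by auto

lemma derivation_ebas_diag_zero:
  assumes "is_derivation al f" "i \<in> {1..5}" "(2::'a::field) \<noteq> 0" "al i i \<noteq> 0"
    and "\<And>m. m \<in> {1..5} \<Longrightarrow> m \<noteq> i \<Longrightarrow> f (ebas i) m = 0"
  shows "f (ebas i) i = (0::'a)"
proof -
  have "(\<Sum>m=1..5. al i m * f (ebas i) m) = (\<Sum>m=1..5. if m = i then al i i * f (ebas i) i else 0)"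
    by (rule sum.cong) (auto simp: assms(5))
  also have "\<dots> = al i i * f (ebas i) i"
    using assms(2) by simp
  finally have "(\<Sum>m=1..5. al i m * f (ebas i) m) = al i i * f (ebas i) i" .
  then show ?thesis using derivation_ebas_row_sum[OF assms(1-3)] assms(4) by simp
qed

lemma atLeastAtMost_1_5: "{1..5::nat} = {1, 2, 3, 4, 5}"
  by auto

lemma eq_smult_e4_minus_e5:
  fixes d :: "nat \<Rightarrow> 'a::field"
  assumes "\<And>m. m \<in> {1, 2, 3} \<Longrightarrow> d m = 0" "d 5 = - d 4" "\<And>k. k \<notin> {1..5} \<Longrightarrow> d k = 0"
  shows "d = (\<lambda>k. d 4 * (ebas 4 k - ebas 5 k))"
proof
  fix k :: nat
  consider "k \<in> {1, 2, 3}" | "k = 4" | "k = 5" | "k \<notin> {1..5}"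
    by fastforce
  then show "d k = d 4 * (ebas 4 k - ebas 5 k)"
    by cases (auto simp: assms ebas_def)
qed

lemma al7_diag: "al7 \<rho> \<sigma> \<alpha> i i = 1/2"
  by (auto simp: al7_def)

context
  fixes \<rho> \<sigma> \<alpha> :: "'a::field" and f :: "(nat \<Rightarrow> 'a) \<Rightarrow> nat \<Rightarrow> 'a"
  assumes D: "is_derivation (al7 \<rho> \<sigma> \<alpha>) f" and two: "(2::'a) \<noteq> 0"
    and \<rho>: "\<rho> \<noteq> 1/2" and \<sigma>: "\<sigma> \<noteq> 1/2" and \<alpha>: "\<alpha> \<noteq> 1/2"
begin

lemma derivation_al7_offdiag:
  assumes "i \<in> {1..5}" "k \<in> {1..5}" "i \<noteq> k" "i \<notin> {4, 5} \<or> k \<notin> {4, 5}"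
  shows "f (ebas i) k = 0"
proof -
  have ne: "1/2 \<noteq> \<rho>" "1/2 \<noteq> \<sigma>" "1/2 \<noteq> \<alpha>" "1 - \<rho> \<noteq> 1/2" "1 - \<sigma> \<noteq> 1/2" "1 - \<alpha> \<noteq> 1/2"
    "1/2 \<noteq> 1 - \<rho>" "1/2 \<noteq> 1 - \<alpha>"
    using two \<rho> \<sigma> \<alpha> by (auto simp: field_simps)
  note idem = derivation_idempotent_coord[OF D]
  note zero = derivation_ebas_coord_zero[OF D]
  have "f (ebas 1) 2 = 0" by (rule idem) (use ne in \<open>simp_all add: al7_def two\<close>)
  moreover have "f (ebas 2) 1 = 0" by (rule idem) (use ne in \<open>simp_all add: al7_def two\<close>)
  moreover have "f (ebas 2) 3 = 0" by (rule idem) (use ne in \<open>simp_all add: al7_def two\<close>)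
  moreover have "f (ebas 3) 2 = 0" by (rule idem) (use ne in \<open>simp_all add: al7_def two\<close>)
  moreover have "f (ebas 3) 4 = 0" by (rule idem) (use ne in \<open>simp_all add: al7_def two\<close>)
  moreover have "f (ebas 4) 3 = 0" by (rule idem) (use ne in \<open>simp_all add: al7_def two\<close>)
  moreover have "f (ebas 3) 5 = 0" by (rule idem) (use ne in \<open>simp_all add: al7_def two\<close>)
  moreover have "f (ebas 5) 3 = 0" by (rule idem) (use ne in \<open>simp_all add: al7_def two\<close>)
  moreover have "f (ebas 1) 3 = 0" by (rule zero[of _ 4]) (use ne in \<open>simp_all add: al7_def two\<close>)
  moreover have d14: "f (ebas 1) 4 = 0" by (rule zero[of _ 3]) (use ne in \<open>simp_all add: al7_def two\<close>)
  moreover have d15: "f (ebas 1) 5 = 0" by (rule zero[of _ 3]) (use ne in \<open>simp_all add: al7_def two\<close>)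
  moreover have "f (ebas 2) 4 = 0" by (rule zero[of _ 1]) (use ne d14 in \<open>simp_all add: al7_def two\<close>)
  moreover have "f (ebas 2) 5 = 0" by (rule zero[of _ 1]) (use ne d15 in \<open>simp_all add: al7_def two\<close>)
  moreover have d41: "f (ebas 4) 1 = 0" by (rule zero[of _ 2]) (use ne in \<open>simp_all add: al7_def two\<close>)
  moreover have "f (ebas 5) 1 = 0" by (rule zero[of _ 2]) (use ne in \<open>simp_all add: al7_def two\<close>)
  moreover have "f (ebas 3) 1 = 0" by (rule zero[of _ 4]) (use ne d41 in \<open>simp_all add: al7_def two\<close>)
  moreover have "f (ebas 4) 2 = 0" by (rule zero[of _ 1]) (use ne in \<open>simp_all add: al7_def two\<close>)
  moreover have "f (ebas 5) 2 = 0" by (rule zero[of _ 1]) (use ne in \<open>simp_all add: al7_def two\<close>)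
  ultimately show ?thesis
    using assms(3,4) assms(1,2)[unfolded atLeastAtMost_1_5] by auto
qed

lemma derivation_al7_ebas_low:
  assumes "i \<in> {1, 2, 3}"
  shows "f (ebas i) = (\<lambda>_. 0)"
proof
  fix k
  have i: "i \<in> {1..5}" using assms by auto
  have off: "f (ebas i) m = 0" if "m \<in> {1..5}" "m \<noteq> i" for m
    using derivation_al7_offdiag[OF i that(1)] that(2) assms by auto
  have "f (ebas i) i = 0"
    using derivation_ebas_diag_zero[OF D i two _ off] two by (simp add: al7_diag)
  then show "f (ebas i) k = 0"
    using off lin_map_outside[OF derivation_lin_map[OF D] ebas_in_Vsp[OF i]] by (cases "k = i") auto
qed

lemma derivation_al7_ebas_high:
  assumes "i \<in> {4, 5}"
  shows "f (ebas i) = (\<lambda>k. f (ebas i) 4 * (ebas 4 k - ebas 5 k))"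
proof (rule eq_smult_e4_minus_e5)
  have i: "i \<in> {1..5}" using assms by auto
  show off: "f (ebas i) m = 0" if "m \<in> {1, 2, 3}" for m
    using derivation_al7_offdiag[OF i, of m] that assms by auto
  have "(\<Sum>m=1..5. al7 \<rho> \<sigma> \<alpha> i m * f (ebas i) m) = 0"
    by (rule derivation_ebas_row_sum[OF D i two])
  then have "f (ebas i) 4 + f (ebas i) 5 = 0"
    unfolding sum_1_5
    using assms off[of 1] off[of 2] off[of 3] two by (auto simp: al7_def field_simps)
  then show "f (ebas i) 5 = - f (ebas i) 4"
    by (simp add: eq_neg_iff_add_eq_0 add.commute)
  show "f (ebas i) k = 0" if "k \<notin> {1..5}" for k
    using lin_map_outside[OF derivation_lin_map[OF D] ebas_in_Vsp[OF i] that] .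
qed

end

lemma is_derivation_al7_of_basis_images:
  fixes \<rho> \<sigma> \<alpha> :: "'a::field"
  assumes two: "(2::'a) \<noteq> 0" and L: "lin_map f"
    and low: "f (ebas 1) = (\<lambda>_. 0)" "f (ebas 2) = (\<lambda>_. 0)" "f (ebas 3) = (\<lambda>_. 0)"
    and high: "f (ebas 4) = (\<lambda>k. c4 * (ebas 4 k - ebas 5 k))" "f (ebas 5) = (\<lambda>k. c5 * (ebas 4 k - ebas 5 k))"
  shows "is_derivation (al7 \<rho> \<sigma> \<alpha>) f"
proof -
  let ?m = "lv_mult (al7 \<rho> \<sigma> \<alpha>)"
  note fw = lin_map_apply_line[OF L _ low high]
  have "f (?m u v) k = ?m (f u) v k + ?m u (f v) k" if "u \<in> Vsp" "v \<in> Vsp" for u v k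
  proof (cases "k \<in> {1..5}")
    case True
    \<comment> \<open>Abstracting 1/2 stops simp from clearing the denominator of every structure constant.\<close>
    define h :: 'a where "h = 1/2"
    have h2: "2 * h = 1" and "(1::'a)/2 = h" using two by (simp_all add: h_def)
    show ?thesis
      unfolding fw[OF that(1)] fw[OF that(2)] fw[OF lv_mult_in_Vsp]
      unfolding lv_mult_def sum_1_5
      using True h2 unfolding atLeastAtMost_1_5
      by (elim insertE emptyE) (simp_all add: al7_def ebas_def \<open>1/2 = h\<close> algebra_simps)
  next
    case False
    then show ?thesis using lin_map_outside[OF L lv_mult_in_Vsp False] by (simp add: lv_mult_outside)
  qed
  then show ?thesis unfolding is_derivation_def using L by auto
qed

theorem mainTheorem7:
  fixes \<rho> \<sigma> \<alpha> :: "'a::field"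
  assumes "(2::'a) \<noteq> 0"
    and "\<rho> \<noteq> 1/2" and "\<sigma> \<noteq> 1/2" and "\<alpha> \<noteq> 1/2"
  shows "{f. is_derivation (al7 \<rho> \<sigma> \<alpha>) f} =
         {f. lin_map f \<and> f (ebas 1) = (\<lambda>_. 0) \<and> f (ebas 2) = (\<lambda>_. 0) \<and> f (ebas 3) = (\<lambda>_. 0) \<and>
             (\<forall>v\<in>Vsp. \<exists>c. f v = (\<lambda>k. c * (ebas 4 k - ebas 5 k)))}"
proof (intro set_eqI iffI; simp only: mem_Collect_eq)
  fix f :: "(nat \<Rightarrow> 'a) \<Rightarrow> nat \<Rightarrow> 'a"
  assume D: "is_derivation (al7 \<rho> \<sigma> \<alpha>) f"
  have low: "f (ebas 1) = (\<lambda>_. 0)" "f (ebas 2) = (\<lambda>_. 0)" "f (ebas 3) = (\<lambda>_. 0)"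
    by (simp_all add: derivation_al7_ebas_low[OF D assms])
  have high: "f (ebas 4) = (\<lambda>k. f (ebas 4) 4 * (ebas 4 k - ebas 5 k))"
    "f (ebas 5) = (\<lambda>k. f (ebas 5) 4 * (ebas 4 k - ebas 5 k))"
    using derivation_al7_ebas_high[OF D assms] by blast+
  show "lin_map f \<and> f (ebas 1) = (\<lambda>_. 0) \<and> f (ebas 2) = (\<lambda>_. 0) \<and> f (ebas 3) = (\<lambda>_. 0) \<and>
      (\<forall>v\<in>Vsp. \<exists>c. f v = (\<lambda>k. c * (ebas 4 k - ebas 5 k)))"
    using derivation_lin_map[OF D] low lin_map_apply_line[OF derivation_lin_map[OF D] _ low high] by blast
next
  fix f :: "(nat \<Rightarrow> 'a) \<Rightarrow> nat \<Rightarrow> 'a"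
  assume "lin_map f \<and> f (ebas 1) = (\<lambda>_. 0) \<and> f (ebas 2) = (\<lambda>_. 0) \<and> f (ebas 3) = (\<lambda>_. 0) \<and>
      (\<forall>v\<in>Vsp. \<exists>c. f v = (\<lambda>k. c * (ebas 4 k - ebas 5 k)))"
  then have L: "lin_map f" and low: "f (ebas 1) = (\<lambda>_. 0)" "f (ebas 2) = (\<lambda>_. 0)" "f (ebas 3) = (\<lambda>_. 0)"
    and line: "\<forall>v\<in>Vsp. \<exists>c. f v = (\<lambda>k. c * (ebas 4 k - ebas 5 k))"
    by blast+
  obtain c4 c5 where "f (ebas 4) = (\<lambda>k. c4 * (ebas 4 k - ebas 5 k))" "f (ebas 5) = (\<lambda>k. c5 * (ebas 4 k - ebas 5 k))"
    using line ebas_in_Vsp[of 4] ebas_in_Vsp[of 5] by force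
  then show "is_derivation (al7 \<rho> \<sigma> \<alpha>) f"
    by (rule is_derivation_al7_of_basis_images[OF assms(1) L low])
qed

end
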